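(* Let $r$ be a non-negative integer and $B(x,y)=(-1)^{x+y}$. Then there exist $C\in\mathbb{Q}(q)$ and a $q$-polynomial $T(x,y)$ in $x$ and $y$ over $\mathbb{Q}$ such that $D(r,B)(x,y)=(-1)^{x+y}q^{r(x+y)}C+T(x,y)$ for all integers $x,y$.
   Context: $q$ is an indeterminate. Sums use the convention: $\sum_{i=a}^bf(i)=f(a)+\cdots+f(b)$ if $a\le b$, $0$ if $b=a-1$, and $-f(b+1)-\cdots-f(a-1)$ if $b+1\le a-1$. $D(0,B)=B$ and $D(r,B)(x,y)=\sum_{x'=x+1}^{y+1}\sum_{y'=x}^{y}D(r-1,B)(x',y')\,q^{x'+y'}$. A $q$-polynomial in $x,y$ over $\mathbb{Q}$ is a polynomial in $q^x,q^y$ with coefficients in $\mathbb{Q}(q)$. *)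

theory Defs
  imports "HOL-Computational_Algebra.Polynomial" "HOL-Computational_Algebra.Fraction_Field"
begin

type_synonym qfield = "rat poly fract"

definition qq :: qfield where
  "qq = Fract [:0, 1:] 1"

text \<open>Signed sum convention over integer bounds.\<close>
definition gsum :: "(int \<Rightarrow> 'a::ab_group_add) \<Rightarrow> int \<Rightarrow> int \<Rightarrow> 'a" where
  "gsum f a b = (if a \<le> b then sum f {a..b} else - sum f {b+1..a-1})"

fun D :: "nat \<Rightarrow> (int \<Rightarrow> int \<Rightarrow> qfield) \<Rightarrow> int \<Rightarrow> int \<Rightarrow> qfield" where
  "D 0 B x y = B x y"
| "D (Suc r) B x y =
     gsum (\<lambda>x'. gsum (\<lambda>y'. D r B x' y' * qq powi (x' + y')) x y) (x + 1) (y + 1)"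

definition is_qpoly2 :: "(int \<Rightarrow> int \<Rightarrow> qfield) \<Rightarrow> bool" where
  "is_qpoly2 T \<longleftrightarrow> (\<exists>S c. finite S \<and>
     (\<forall>x y. T x y = (\<Sum>(i,j)\<in>S. c i j * (qq powi x) ^ i * (qq powi y) ^ j)))"

end

theory Submission
  imports Defs
begin

(* The step from D(r,B) to D(r+1,B) is linear, and it maps an exponential u^x v^y to a
   product of two geometric sums, i.e. to a combination of the four exponentials
   (uq vq)^y, (vq)^x (uq)^y, (uq)^x (vq)^y and (uq vq)^x.  For q-monomials u = q^i, v = q^j
   all four are q-monomials again, so q-polynomials are preserved.  For u = v = -q^r the
   two middle terms are multiples of (-q^(r+1))^(x+y), while the outer ones only involve
   (q^(2r+2))^x and (q^(2r+2))^y. *)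

lemma qq_power: "qq ^ k = Fract ([:0, 1:] ^ k) 1"
  by (induction k) (auto simp: qq_def One_fract_def)

lemma qq_nonzero: "qq \<noteq> 0"
  by (simp add: qq_def Zero_fract_def eq_fract)

lemma degree_qq_power_poly: "degree ([:0, 1 :: rat:] ^ k) = k"
  by (simp add: degree_power_eq)

lemma qq_power_ne_one: "k > 0 \<Longrightarrow> qq ^ k \<noteq> 1"
  using degree_qq_power_poly[of k] by (auto simp: qq_power One_fract_def eq_fract)

lemma minus_qq_power_ne_one: "- (qq ^ k) \<noteq> 1"
proof
  assume "- (qq ^ k) = 1"
  then have eq: "- ([:0, 1 :: rat:] ^ k) = 1"
    by (simp add: qq_power One_fract_def eq_fract)
  then have "k = 0"
    using degree_qq_power_poly[of k] by (metis degree_1 degree_minus)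
  with eq show False by simp
qed

lemma sum_int_telescope:
  fixes f :: "int \<Rightarrow> 'a::ab_group_add"
  shows "a - 1 \<le> b \<Longrightarrow> (\<Sum>k = a..b. f (k + 1) - f k) = f (b + 1) - f a"
proof (induction b rule: int_ge_induct[where k = "a - 1"])
  case (step i)
  then have "{a..i + 1} = insert (i + 1) {a..i}"
    using atLeastAtMostPlus1_int_conv[of a i] by (simp add: add.commute)
  with step show ?case by simp
qed simp

lemma gsum_telescope:
  fixes f :: "int \<Rightarrow> 'a::ab_group_add"
  shows "gsum (\<lambda>k. f (k + 1) - f k) a b = f (b + 1) - f a"
  using sum_int_telescope[of a b f] sum_int_telescope[of "b + 1" "a - 1" f]
  by (simp add: gsum_def)

lemma gsum_add: "gsum (\<lambda>k. f k + g k) a b = gsum f a b + gsum g a b"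
  by (simp add: gsum_def sum.distrib)

lemma gsum_distrib_left: "gsum (\<lambda>k. c * f k) a b = (c :: 'a::ring) * gsum f a b"
  by (simp add: gsum_def sum_distrib_left)

lemma gsum_distrib_right: "gsum (\<lambda>k. f k * c) a b = gsum f a b * (c :: 'a::ring)"
  by (simp add: gsum_def sum_distrib_right)

lemma gsum_sum_swap: "gsum (\<lambda>k. \<Sum>p\<in>S. f p k) a b = (\<Sum>p\<in>S. gsum (f p) a b)"
  by (simp add: gsum_def sum.swap[of _ S] sum_negf)

lemma gsum_power_int_geometric:
  fixes z :: "'a::field"
  assumes "z \<noteq> 0" "z \<noteq> 1"
  shows "gsum (\<lambda>k. z powi k) a b = (z powi (b + 1) - z powi a) / (z - 1)"
proof -
  have "z powi (k + 1) - z powi k = z powi k * (z - 1)" for k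
    using assms by (subst power_int_add_1) (auto simp: algebra_simps)
  then have "z powi k = (z powi (k + 1) - z powi k) * inverse (z - 1)" for k
    using assms by simp
  then have "gsum (\<lambda>k. z powi k) a b = gsum (\<lambda>k. (z powi (k + 1) - z powi k) * inverse (z - 1)) a b"
    by presburger
  then show ?thesis
    by (simp only: gsum_distrib_right gsum_telescope divide_inverse)
qed

definition D_step :: "(int \<Rightarrow> int \<Rightarrow> qfield) \<Rightarrow> int \<Rightarrow> int \<Rightarrow> qfield" where
  "D_step f x y = gsum (\<lambda>x'. gsum (\<lambda>y'. f x' y' * qq powi (x' + y')) x y) (x + 1) (y + 1)"

lemma D_Suc_eq_D_step: "D (Suc r) B = D_step (D r B)"
  by (simp add: D_step_def fun_eq_iff)

lemma D_step_add: "D_step (\<lambda>x y. f x y + g x y) x y = D_step f x y + D_step g x y"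
  by (simp add: D_step_def distrib_right gsum_add)

lemma D_step_cmult: "D_step (\<lambda>x y. c * f x y) x y = c * D_step f x y"
  by (simp add: D_step_def gsum_distrib_left mult.assoc)

lemma D_step_sum: "D_step (\<lambda>x y. \<Sum>p\<in>S. F p x y) x y = (\<Sum>p\<in>S. D_step (F p) x y)"
  by (simp add: D_step_def sum_distrib_right gsum_sum_swap)

definition exp2 :: "qfield \<Rightarrow> qfield \<Rightarrow> int \<Rightarrow> int \<Rightarrow> qfield" where
  "exp2 u v x y = u powi x * v powi y"

lemma D_step_exp2:
  assumes "u \<noteq> 0" "v \<noteq> 0" "u * qq \<noteq> 1" "v * qq \<noteq> 1"
  defines "a \<equiv> u * qq" and "b \<equiv> v * qq"
  shows "D_step (exp2 u v) x y =
    (a\<^sup>2 * b * exp2 1 (a * b) x y - a\<^sup>2 * exp2 b a x y - a * b * exp2 a b x y + a * exp2 (a * b) 1 x y)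
      / ((a - 1) * (b - 1))"
proof -
  have ab: "a \<noteq> 0" "b \<noteq> 0" "a \<noteq> 1" "b \<noteq> 1"
    using assms qq_nonzero by auto
  have "exp2 u v x' y' * qq powi (x' + y') = a powi x' * b powi y'" for x' y'
    using qq_nonzero by (simp add: exp2_def a_def b_def power_int_add power_int_mult_distrib)
  then have "D_step (exp2 u v) x y = gsum (\<lambda>k. a powi k) (x + 1) (y + 1) * gsum (\<lambda>k. b powi k) x y"
    by (simp add: D_step_def gsum_distrib_left gsum_distrib_right)
  also have "\<dots> = (a powi (y + 2) - a powi (x + 1)) * (b powi (y + 1) - b powi x) / ((a - 1) * (b - 1))"
    using ab by (simp add: gsum_power_int_geometric add.assoc)
  also have "(a powi (y + 2) - a powi (x + 1)) * (b powi (y + 1) - b powi x)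
      = a\<^sup>2 * b * exp2 1 (a * b) x y - a\<^sup>2 * exp2 b a x y - a * b * exp2 a b x y + a * exp2 (a * b) 1 x y"
    using ab by (simp add: exp2_def power_int_add power_int_mult_distrib power2_eq_square algebra_simps)
  finally show ?thesis .
qed

lemma exp2_qq_power: "exp2 (qq ^ i) (qq ^ j) x y = (qq powi x) ^ i * (qq powi y) ^ j"
  by (simp add: exp2_def power_int_power power_int_power' mult.commute)

lemma is_qpoly2_zero: "is_qpoly2 (\<lambda>x y. 0)"
  unfolding is_qpoly2_def by (rule exI[of _ "{}"]) simp

lemma is_qpoly2_monomial: "is_qpoly2 (\<lambda>x y. c * exp2 (qq ^ i) (qq ^ j) x y)"
  unfolding is_qpoly2_def
  by (rule exI[of _ "{(i, j)}"], rule exI[of _ "\<lambda>_ _. c"]) (simp add: exp2_qq_power mult.assoc)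

lemma is_qpoly2_cmult: "is_qpoly2 T \<Longrightarrow> is_qpoly2 (\<lambda>x y. c * T x y)"
  unfolding is_qpoly2_def
  by (elim exE conjE, rule exI, rule exI[of _ "\<lambda>i j. c * _ i j"])
    (auto simp: sum_distrib_left case_prod_unfold mult.assoc)

lemma is_qpoly2_add:
  assumes "is_qpoly2 T1" "is_qpoly2 T2"
  shows "is_qpoly2 (\<lambda>x y. T1 x y + T2 x y)"
proof -
  obtain S1 c1 where S1: "finite S1"
    and T1: "\<And>x y. T1 x y = (\<Sum>(i, j)\<in>S1. c1 i j * (qq powi x) ^ i * (qq powi y) ^ j)"
    using assms(1) unfolding is_qpoly2_def by blast
  obtain S2 c2 where S2: "finite S2"
    and T2: "\<And>x y. T2 x y = (\<Sum>(i, j)\<in>S2. c2 i j * (qq powi x) ^ i * (qq powi y) ^ j)"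
    using assms(2) unfolding is_qpoly2_def by blast
  define c where "c i j = (if (i, j) \<in> S1 then c1 i j else 0) + (if (i, j) \<in> S2 then c2 i j else 0)"
    for i j
  have "T1 x y + T2 x y = (\<Sum>(i, j)\<in>S1 \<union> S2. c i j * (qq powi x) ^ i * (qq powi y) ^ j)" for x y
  proof -
    have restrict:
      "(\<Sum>p\<in>S1 \<union> S2. (if p \<in> S then d (fst p) (snd p) else 0) * (qq powi x) ^ fst p * (qq powi y) ^ snd p)
        = (\<Sum>p\<in>S. d (fst p) (snd p) * (qq powi x) ^ fst p * (qq powi y) ^ snd p)"
      if "S \<subseteq> S1 \<union> S2" for S d
      using that S1 S2 by (intro sum.mono_neutral_cong_right) auto
    show ?thesis
      by (simp add: c_def distrib_right sum.distrib case_prod_unfold T1 T2 restrict)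
  qed
  then show ?thesis
    using S1 S2 unfolding is_qpoly2_def by blast
qed

lemma is_qpoly2_sum:
  "finite S \<Longrightarrow> (\<And>p. p \<in> S \<Longrightarrow> is_qpoly2 (F p)) \<Longrightarrow> is_qpoly2 (\<lambda>x y. \<Sum>p\<in>S. F p x y)"
  by (induction S rule: finite_induct) (auto intro: is_qpoly2_zero is_qpoly2_add)

lemma is_qpoly2_D_step_monomial: "is_qpoly2 (D_step (exp2 (qq ^ i) (qq ^ j)))"
proof -
  define a where "a = qq ^ Suc i"
  define b where "b = qq ^ Suc j"
  define K where "K = inverse ((a - 1) * (b - 1))"
  have "qq ^ i \<noteq> 0" "qq ^ j \<noteq> 0" "qq ^ i * qq \<noteq> 1" "qq ^ j * qq \<noteq> 1"
    using qq_nonzero qq_power_ne_one[of "Suc i"] qq_power_ne_one[of "Suc j"]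
    by (auto simp del: power_Suc simp flip: power_Suc2)
  then have "D_step (exp2 (qq ^ i) (qq ^ j)) = (\<lambda>x y.
      K * a\<^sup>2 * b * exp2 (qq ^ 0) (qq ^ (Suc i + Suc j)) x y
      + - K * a\<^sup>2 * exp2 (qq ^ Suc j) (qq ^ Suc i) x y
      + - K * a * b * exp2 (qq ^ Suc i) (qq ^ Suc j) x y
      + K * a * exp2 (qq ^ (Suc i + Suc j)) (qq ^ 0) x y)" (is "_ = ?rhs")
    using D_step_exp2[of "qq ^ i" "qq ^ j"]
    by (simp add: fun_eq_iff K_def a_def b_def power_Suc2 power_add divide_inverse algebra_simps)
  moreover have "is_qpoly2 ?rhs"
    by (intro is_qpoly2_add is_qpoly2_monomial)
  ultimately show ?thesis
    by simp
qed

lemma is_qpoly2_D_step: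
  assumes "is_qpoly2 T"
  shows "is_qpoly2 (D_step T)"
proof -
  obtain S c where S: "finite S"
    and T: "\<And>x y. T x y = (\<Sum>(i, j)\<in>S. c i j * (qq powi x) ^ i * (qq powi y) ^ j)"
    using assms unfolding is_qpoly2_def by blast
  have T_exp2: "T = (\<lambda>x y. \<Sum>p\<in>S. c (fst p) (snd p) * exp2 (qq ^ fst p) (qq ^ snd p) x y)"
    by (simp add: fun_eq_iff T case_prod_unfold exp2_qq_power mult.assoc)
  have "D_step T = (\<lambda>x y. \<Sum>p\<in>S. c (fst p) (snd p) * D_step (exp2 (qq ^ fst p) (qq ^ snd p)) x y)"
    (is "_ = ?rhs")
    unfolding T_exp2 by (simp add: fun_eq_iff D_step_sum D_step_cmult)
  moreover have "is_qpoly2 ?rhs"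
    using S by (intro is_qpoly2_sum is_qpoly2_cmult is_qpoly2_D_step_monomial)
  ultimately show ?thesis
    by simp
qed

definition alt_plus_qpoly :: "nat \<Rightarrow> (int \<Rightarrow> int \<Rightarrow> qfield) \<Rightarrow> bool" where
  "alt_plus_qpoly s f \<longleftrightarrow>
    (\<exists>C T. is_qpoly2 T \<and> f = (\<lambda>x y. C * exp2 (- (qq ^ s)) (- (qq ^ s)) x y + T x y))"

lemma alt_plus_qpoly_D_step_exp2: "alt_plus_qpoly (Suc s) (D_step (exp2 (- (qq ^ s)) (- (qq ^ s))))"
proof -
  define a where "a = - (qq ^ Suc s)"
  define K where "K = inverse ((a - 1) * (a - 1))"
  have "- (qq ^ s) \<noteq> 0" "- (qq ^ s) * qq \<noteq> 1"
    using qq_nonzero minus_qq_power_ne_one[of "Suc s"]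
    by (auto simp del: power_Suc simp flip: power_Suc2)
  then have "D_step (exp2 (- (qq ^ s)) (- (qq ^ s))) = (\<lambda>x y. - 2 * K * a\<^sup>2 * exp2 a a x y
      + (K * a ^ 3 * exp2 (qq ^ 0) (qq ^ (Suc s + Suc s)) x y
        + K * a * exp2 (qq ^ (Suc s + Suc s)) (qq ^ 0) x y))"
    using D_step_exp2[of "- (qq ^ s)" "- (qq ^ s)"]
    by (simp add: fun_eq_iff K_def a_def power_Suc2 power_add divide_inverse power2_eq_square
        power3_eq_cube algebra_simps)
  moreover have "is_qpoly2 (\<lambda>x y. K * a ^ 3 * exp2 (qq ^ 0) (qq ^ (Suc s + Suc s)) x y
      + K * a * exp2 (qq ^ (Suc s + Suc s)) (qq ^ 0) x y)"
    by (intro is_qpoly2_add is_qpoly2_monomial)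
  ultimately show ?thesis
    unfolding alt_plus_qpoly_def a_def by blast
qed

lemma alt_plus_qpoly_D_step:
  assumes "alt_plus_qpoly s f"
  shows "alt_plus_qpoly (Suc s) (D_step f)"
proof -
  obtain C T where T: "is_qpoly2 T" and f: "f = (\<lambda>x y. C * exp2 (- (qq ^ s)) (- (qq ^ s)) x y + T x y)"
    using assms unfolding alt_plus_qpoly_def by blast
  obtain K T' where T': "is_qpoly2 T'"
    and step: "D_step (exp2 (- (qq ^ s)) (- (qq ^ s)))
      = (\<lambda>x y. K * exp2 (- (qq ^ Suc s)) (- (qq ^ Suc s)) x y + T' x y)"
    using alt_plus_qpoly_D_step_exp2[of s] unfolding alt_plus_qpoly_def by blast
  have "D_step f
      = (\<lambda>x y. (C * K) * exp2 (- (qq ^ Suc s)) (- (qq ^ Suc s)) x y + (C * T' x y + D_step T x y))"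
    by (simp add: fun_eq_iff f D_step_add D_step_cmult step algebra_simps)
  moreover have "is_qpoly2 (\<lambda>x y. C * T' x y + D_step T x y)"
    using T T' by (intro is_qpoly2_add is_qpoly2_cmult is_qpoly2_D_step)
  ultimately show ?thesis
    unfolding alt_plus_qpoly_def by blast
qed

lemma alt_plus_qpoly_D: "alt_plus_qpoly s B \<Longrightarrow> alt_plus_qpoly (s + r) (D r B)"
proof (induction r)
  case 0
  moreover have "D 0 B = B"
    by (simp add: fun_eq_iff)
  ultimately show ?case
    by simp
next
  case (Suc r)
  then show ?case
    by (simp add: D_Suc_eq_D_step alt_plus_qpoly_D_step)
qed

lemma exp2_diagonal: "u \<noteq> 0 \<Longrightarrow> exp2 u u x y = u powi (x + y)"
  by (simp add: exp2_def power_int_add)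

lemma minus_qq_power_powi: "(- (qq ^ r)) powi n = (-1) powi n * qq powi (int r * n)"
  by (metis mult_minus1 power_int_mult_distrib power_int_power)

theorem lemma18:
  fixes r :: nat
  shows "\<exists>(C::qfield) T. is_qpoly2 T \<and>
    (\<forall>x y :: int. D r (\<lambda>x y. (-1) powi (x + y)) x y
        = (-1) powi (x + y) * qq powi (int r * (x + y)) * C + T x y)"
proof -
  have "alt_plus_qpoly 0 (\<lambda>x y. (-1) powi (x + y))"
    unfolding alt_plus_qpoly_def
    by (rule exI[of _ 1], rule exI[of _ "\<lambda>x y. 0"]) (simp add: is_qpoly2_zero exp2_diagonal)
  then have "alt_plus_qpoly r (D r (\<lambda>x y. (-1) powi (x + y)))"
    using alt_plus_qpoly_D[of 0] by simp
  then obtain C T where "is_qpoly2 T"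
    and "D r (\<lambda>x y. (-1) powi (x + y)) = (\<lambda>x y. C * exp2 (- (qq ^ r)) (- (qq ^ r)) x y + T x y)"
    unfolding alt_plus_qpoly_def by blast
  then show ?thesis
    using qq_nonzero
    by (intro exI[of _ C] exI[of _ T]) (simp add: exp2_diagonal minus_qq_power_powi mult.commute)
qed

end
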